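(* Let $n>2$ be an integer, $a\in\mathbb{R}$ with $a\neq0$, and $b\in\{1,-1\}$. Put $\varphi=2\pi/n$, $p=\lfloor (n-1)/2\rfloor$, $q=\lfloor n/2\rfloor$, and for $c\in\mathbb{R}$ define \[\lambda_k(c)=c+2a\cos(k\varphi)\ (k=1,\dots,n-1),\quad \lambda_{\mathrm{sep}}(c)=c+2a,\quad \lambda_{\mathrm{lim}}(c)=c-2a,\] \[\lambda_\pm(c)=\tfrac12\Bigl(2a-(n-1)c\pm\sqrt{\bigl(2a+(n+1)c\bigr)^2+4n}\Bigr).\] Then: (a) for every $k=1,\dots,n-1$ and every $c$, $\lambda_{\mathrm{sep}}(c)>\lambda_k(c)$ if $a>0$, and $\lambda_{\mathrm{sep}}(c)<\lambda_k(c)$ if $a<0$; (b) $\lambda_k=\lambda_{n-k}$ for $k=1,\dots,p$; (c) the sequence $(\lambda_1,\dots,\lambda_q)$ is strictly decreasing if $a>0$ and strictly increasing if $a<0$; all $\lambda_k$ are bounded (below if $a>0$, above if $a<0$) by $\lambda_{\mathrm{lim}}=c-2a$, and for even $n$ one has $\lambda_q=\lambda_{n/2}=c-2a$; (d) for $a>0$ (resp. $a<0$) each curve $\lambda=\lambda_k(c)$ meets the curve $\lambda=\lambda_-(c)$ (resp. $\lambda=\lambda_+(c)$) at exactly one point $\mathsf C_k$, whose abscissa is \[c_k=\frac{4a^2\cos(k\varphi)\bigl(1-\cos(k\varphi)\bigr)+n}{2(n+1)a\bigl(\cos(k\varphi)-1\bigr)};\] as $k$ increases from $1$ to $q$, the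 $c_k$ form an increasing sequence if $a>0$ and a decreasing sequence if $a<0$.
   Context: The functions $\lambda_\pm(c)$ and $\lambda_k(c)$ are the eigenvalues of the $(n+1)\times(n+1)$ symmetric matrix $m_n(a,b,c)$ with $b^2=1$: rows/columns indexed $0,\dots,n$, $(0,0)$-entry $-nc$, $(0,j)$- and $(j,0)$-entries $b$ ($j=1,\dots,n$), lower-right block the circulant $\mathrm{circ}(c,a,0,\dots,0,a)$. *)

theory Defs
  imports Complex_Main
begin

definition phi :: "nat \<Rightarrow> real" where
  "phi n = 2 * pi / real n"

definition lam :: "nat \<Rightarrow> real \<Rightarrow> nat \<Rightarrow> real \<Rightarrow> real" where
  "lam n a k c = c + 2 * a * cos (real k * phi n)"

definition lam_sep :: "real \<Rightarrow> real \<Rightarrow> real" where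
  "lam_sep a c = c + 2 * a"

definition lam_lim :: "real \<Rightarrow> real \<Rightarrow> real" where
  "lam_lim a c = c - 2 * a"

definition lam_plus :: "nat \<Rightarrow> real \<Rightarrow> real \<Rightarrow> real" where
  "lam_plus n a c = (2 * a - (real n - 1) * c + sqrt ((2 * a + (real n + 1) * c)\<^sup>2 + 4 * real n)) / 2"

definition lam_minus :: "nat \<Rightarrow> real \<Rightarrow> real \<Rightarrow> real" where
  "lam_minus n a c = (2 * a - (real n - 1) * c - sqrt ((2 * a + (real n + 1) * c)\<^sup>2 + 4 * real n)) / 2"

definition ck :: "nat \<Rightarrow> real \<Rightarrow> nat \<Rightarrow> real" where
  "ck n a k = (4 * a\<^sup>2 * cos (real k * phi n) * (1 - cos (real k * phi n)) + real n)
              / (2 * (real n + 1) * a * (cos (real k * phi n) - 1))"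

end

theory Submission imports Defs begin

text \<open>Everything reduces to two facts about the angles \<open>k\<phi>\<close>: \<open>cos (k\<phi>) < 1\<close> for
\<open>0 < k < n\<close>, and \<open>cos (k\<phi>)\<close> is strictly decreasing for \<open>k\<phi> \<in> [0, \<pi>]\<close>.
For the intersections, write \<open>D = (2a + (n+1)c)\<^sup>2 + 4n\<close> and
\<open>R = 2a(1 - 2x) - (n+1)c\<close> with \<open>x = cos (k\<phi>)\<close>; the equation \<open>\<lambda>\<^sub>k = \<lambda>\<^sub>\<mp>\<close> says
\<open>sgn a * sqrt D = R\<close>.  The quadratic terms in \<open>c\<close> cancel in \<open>D - R\<^sup>2\<close>, leaving an
equation linear in \<open>c\<close> whose unique solution is \<open>c\<^sub>k\<close>, and at that solution \<open>R\<close> has the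
sign of \<open>a\<close>.  Finally \<open>a c\<^sub>k = -(4a\<^sup>2x + n/(1 - x)) / (2(n+1))\<close> is decreasing in \<open>x\<close>.
None of this involves \<open>b\<close>, which only enters the matrix through \<open>b\<^sup>2 = 1\<close>.\<close>

lemma cos_less_one:
  assumes "0 < t" "t < 2 * pi"
  shows "cos t < 1"
proof -
  have "sin (t / 2) > 0" using assms by (intro sin_gt_zero) auto
  moreover have "cos t = 1 - 2 * (sin (t / 2))\<^sup>2"
    using cos_double_sin[of "t / 2"] by simp
  ultimately show ?thesis by (simp add: power2_eq_square)
qed

lemma cos_phi_less_one:
  assumes "0 < k" "k < n"
  shows "cos (real k * phi n) < 1"
  using assms by (intro cos_less_one) (auto simp: phi_def field_simps)

lemma cos_phi_strict_antimono:
  assumes "i < j" "2 * j \<le> n"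
  shows "cos (real j * phi n) < cos (real i * phi n)"
proof (rule cos_monotone_0_pi)
  have "real i < real j" "2 * real j \<le> real n" "n > 0" using assms by linarith+
  then show "0 \<le> real i * phi n" "real i * phi n < real j * phi n" "real j * phi n \<le> pi"
    by (auto simp: phi_def field_simps)
qed

lemma cos_phi_reflect:
  assumes "k \<le> n"
  shows "cos (real (n - k) * phi n) = cos (real k * phi n)"
proof (cases "n = 0")
  case False
  then have "real (n - k) * phi n = 2 * pi - real k * phi n"
    using assms by (simp add: phi_def of_nat_diff field_simps)
  then show ?thesis by simp
qed (use assms in simp)

lemma cos_phi_half:
  assumes "even n" "n > 0"
  shows "cos (real (n div 2) * phi n) = -1"
proof -
  have "real (n div 2) * phi n = pi"
    using assms by (auto elim!: evenE simp: phi_def field_simps)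
  then show ?thesis by simp
qed

lemma signed_sqrt_intersection_iff:
  fixes a x N c :: real
  assumes a: "a \<noteq> 0" and x: "x < 1" and N: "N > 0"
  shows "c + 2 * a * x = (2 * a - (N - 1) * c - sgn a * sqrt ((2 * a + (N + 1) * c)\<^sup>2 + 4 * N)) / 2
     \<longleftrightarrow> c = (4 * a\<^sup>2 * x * (1 - x) + N) / (2 * (N + 1) * a * (x - 1))"
proof -
  define D where "D = (2 * a + (N + 1) * c)\<^sup>2 + 4 * N"
  define R where "R = 2 * a * (1 - 2 * x) - (N + 1) * c"
  have D: "D - R\<^sup>2 = 4 * (2 * a * (1 - x) * ((N + 1) * c + 2 * a * x) + N)"
    unfolding D_def R_def by (simp add: power2_eq_square algebra_simps)
  have "D \<ge> 0" using N unfolding D_def by simp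
  have sgn_sq: "sgn a * sgn a = 1" using a by (simp add: sgn_if)
  have "c + 2 * a * x = (2 * a - (N - 1) * c - sgn a * sqrt D) / 2 \<longleftrightarrow> sgn a * sqrt D = R"
    unfolding R_def by (auto simp: algebra_simps)
  also have "\<dots> \<longleftrightarrow> 2 * a * (1 - x) * ((N + 1) * c + 2 * a * x) + N = 0"
  proof
    assume "sgn a * sqrt D = R"
    then have "D = R\<^sup>2"
      using \<open>D \<ge> 0\<close> sgn_sq by (metis mult.assoc mult_1 power2_eq_square power_mult_distrib real_sqrt_pow2)
    then show "2 * a * (1 - x) * ((N + 1) * c + 2 * a * x) + N = 0" using D by simp
  next
    assume lin: "2 * a * (1 - x) * ((N + 1) * c + 2 * a * x) + N = 0"
    then have "D = R\<^sup>2" using D by simp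
    have "R * (2 * a * (1 - x)) = 4 * a\<^sup>2 * (1 - x)\<^sup>2 + N"
      using lin unfolding R_def by (simp add: power2_eq_square algebra_simps)
    also have "\<dots> > 0" using N by (simp add: add_nonneg_pos)
    finally have "0 < (R * a) * (2 * (1 - x))" by (simp add: ac_simps)
    then have "0 < R * a" using x by (simp add: zero_less_mult_iff)
    then have "sgn R = sgn a" by (auto simp: zero_less_mult_iff sgn_if)
    then show "sgn a * sqrt D = R"
      using \<open>D = R\<^sup>2\<close> by (metis real_sqrt_abs sgn_mult_abs)
  qed
  also have "\<dots> \<longleftrightarrow> c * (2 * (N + 1) * a * (x - 1)) = 4 * a\<^sup>2 * x * (1 - x) + N"
    by (auto simp: algebra_simps power2_eq_square)
  also have "\<dots> \<longleftrightarrow> c = (4 * a\<^sup>2 * x * (1 - x) + N) / (2 * (N + 1) * a * (x - 1))"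
    using a x N by (simp add: eq_divide_eq)
  finally show ?thesis unfolding D_def .
qed

lemma lam_eq_lam_minus_iff:
  assumes "a > 0" "0 < k" "k < n"
  shows "lam n a k c = lam_minus n a c \<longleftrightarrow> c = ck n a k"
  using signed_sqrt_intersection_iff[of a "cos (real k * phi n)" "real n" c]
    cos_phi_less_one[of k n] assms
  by (simp add: lam_def lam_minus_def ck_def)

lemma lam_eq_lam_plus_iff:
  assumes "a < 0" "0 < k" "k < n"
  shows "lam n a k c = lam_plus n a c \<longleftrightarrow> c = ck n a k"
  using signed_sqrt_intersection_iff[of a "cos (real k * phi n)" "real n" c]
    cos_phi_less_one[of k n] assms
  by (simp add: lam_def lam_plus_def ck_def)

lemma scaled_intersection_abscissa_strict_antimono:
  fixes a x y N :: real
  assumes a: "a \<noteq> 0" and xy: "y < x" "x < 1" and N: "N > 0"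
  shows "a * ((4 * a\<^sup>2 * x * (1 - x) + N) / (2 * (N + 1) * a * (x - 1)))
       < a * ((4 * a\<^sup>2 * y * (1 - y) + N) / (2 * (N + 1) * a * (y - 1)))"
proof -
  have scaled: "a * ((4 * a\<^sup>2 * t * (1 - t) + N) / (2 * (N + 1) * a * (t - 1)))
      = - (4 * a\<^sup>2 * t + N / (1 - t)) / (2 * (N + 1))" if "t < 1" for t
    using a N that by (simp add: divide_simps) (simp add: algebra_simps power2_eq_square)
  have "N / (1 - y) < N / (1 - x)" using xy N by (intro divide_strict_left_mono) auto
  moreover have "4 * a\<^sup>2 * y < 4 * a\<^sup>2 * x" using a xy by simp
  ultimately have "- (4 * a\<^sup>2 * x + N / (1 - x)) / (2 * (N + 1))
      < - (4 * a\<^sup>2 * y + N / (1 - y)) / (2 * (N + 1))"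
    using N by (intro divide_strict_right_mono) auto
  then show ?thesis using xy by (simp only: scaled)
qed

lemma ck_scaled_strict_mono:
  assumes "a \<noteq> 0" "0 < i" "i < j" "2 * j \<le> n"
  shows "a * ck n a i < a * ck n a j"
  unfolding ck_def
proof (rule scaled_intersection_abscissa_strict_antimono)
  show "cos (real j * phi n) < cos (real i * phi n)"
    using assms by (intro cos_phi_strict_antimono) auto
  show "cos (real i * phi n) < 1"
    using assms by (intro cos_phi_less_one) auto
qed (use assms in auto)

theorem lemma2:
  fixes n :: nat and a b :: real
  assumes "n > 2" and "a \<noteq> 0" and "b = 1 \<or> b = -1"
  shows
   "(\<forall>k\<in>{1..n-1}. \<forall>c.
        (a > 0 \<longrightarrow> lam_sep a c > lam n a k c) \<and> (a < 0 \<longrightarrow> lam_sep a c < lam n a k c))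
    \<and> (\<forall>k\<in>{1..(n-1) div 2}. \<forall>c. lam n a k c = lam n a (n - k) c)
    \<and> (a > 0 \<longrightarrow> (\<forall>c. \<forall>i j. 1 \<le> i \<longrightarrow> i < j \<longrightarrow> j \<le> n div 2 \<longrightarrow> lam n a j c < lam n a i c))
    \<and> (a < 0 \<longrightarrow> (\<forall>c. \<forall>i j. 1 \<le> i \<longrightarrow> i < j \<longrightarrow> j \<le> n div 2 \<longrightarrow> lam n a i c < lam n a j c))
    \<and> (\<forall>k\<in>{1..n-1}. \<forall>c.
        (a > 0 \<longrightarrow> lam_lim a c \<le> lam n a k c) \<and> (a < 0 \<longrightarrow> lam n a k c \<le> lam_lim a c))
    \<and> (even n \<longrightarrow> (\<forall>c. lam n a (n div 2) c = lam_lim a c))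
    \<and> (\<forall>k\<in>{1..n-1}.
        (a > 0 \<longrightarrow> {c. lam n a k c = lam_minus n a c} = {ck n a k})
      \<and> (a < 0 \<longrightarrow> {c. lam n a k c = lam_plus n a c} = {ck n a k}))
    \<and> (a > 0 \<longrightarrow> (\<forall>i j. 1 \<le> i \<longrightarrow> i < j \<longrightarrow> j \<le> n div 2 \<longrightarrow> ck n a i < ck n a j))
    \<and> (a < 0 \<longrightarrow> (\<forall>i j. 1 \<le> i \<longrightarrow> i < j \<longrightarrow> j \<le> n div 2 \<longrightarrow> ck n a j < ck n a i))"
proof (intro conjI ballI allI impI)
  fix k c assume "k \<in> {1..n-1}"
  then have k: "0 < k" "k < n" using \<open>n > 2\<close> by auto
  note lt1 = cos_phi_less_one[OF k]
  have ge: "-1 \<le> cos (real k * phi n)" by simp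
  show "lam_sep a c > lam n a k c" "lam_lim a c \<le> lam n a k c" if "a > 0"
    using that lt1 mult_left_mono[OF ge, of a] by (simp_all add: lam_def lam_sep_def lam_lim_def)
  show "lam_sep a c < lam n a k c" "lam n a k c \<le> lam_lim a c" if "a < 0"
    using that lt1 mult_left_mono_neg[OF ge, of a] by (simp_all add: lam_def lam_sep_def lam_lim_def)
  show "{c. lam n a k c = lam_minus n a c} = {ck n a k}" if "a > 0"
    using lam_eq_lam_minus_iff[OF that k] by auto
  show "{c. lam n a k c = lam_plus n a c} = {ck n a k}" if "a < 0"
    using lam_eq_lam_plus_iff[OF that k] by auto
next
  fix k c assume "k \<in> {1..(n-1) div 2}"
  then have "k \<le> n" by auto
  then show "lam n a k c = lam n a (n - k) c" using cos_phi_reflect[of k n] by (simp add: lam_def)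
next
  fix c show "lam n a (n div 2) c = lam_lim a c" if "even n"
    using that \<open>n > 2\<close> by (simp add: lam_def lam_lim_def cos_phi_half)
next
  fix c i j assume "1 \<le> i" "i < j" "j \<le> n div 2"
  then have "cos (real j * phi n) < cos (real i * phi n)" by (intro cos_phi_strict_antimono) auto
  then show "a > 0 \<Longrightarrow> lam n a j c < lam n a i c" "a < 0 \<Longrightarrow> lam n a i c < lam n a j c"
    by (simp_all add: lam_def)
next
  fix i j assume "1 \<le> i" "i < j" "j \<le> n div 2"
  then have "a * ck n a i < a * ck n a j" using \<open>a \<noteq> 0\<close> by (intro ck_scaled_strict_mono) auto
  then show "a > 0 \<Longrightarrow> ck n a i < ck n a j" "a < 0 \<Longrightarrow> ck n a j < ck n a i"
    by (simp_all add: mult_less_cancel_left)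
qed

end
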